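(* Let $X$ be a finite set of finite words and let $(w_i)_{i\in\mathbb{N}}$ be finite words with $\lim_{i\to\infty}|w_i| = \infty$. If every $w_i$ has an $X$-interpretation but no $w_i$ is a synchronizing word of $X$, then one can write $w_i = u_iv_i$ for each $i$ so that some subsequence of the sequence of shifted finite words $(u_i\,|\,v_i)_{i\in\mathbb{N}}$ converges to a bi-infinite word that has two different $X$-factorizations.
   Context: A word $w$ is a synchronizing word of $X$ if $w = w_1w_2$ for some words $w_1,w_2$ such that for every $v\in X^*$ of the form $v = pws$, we have $pw_1\in X^*$ and $w_2s\in X^*$. An $X$-interpretation of a finite word $w$ is a factorization $w = w_1w_2\cdots w_n$ where $w_1$ is a suffix of a word in $X$, $w_n$ is a prefix of a word in $X$, and $w_j\in X$ for $1<j<n$. The shifted word $(u\,|\,v)$ with $u = a_{-m}\cdots a_{-1}$, $v = a_0\cdots a_n$ is the map $\{-m,\dots,n\}\to$ letters, $k\mapsto a_k$. A sequence of shifted finite words $t_i:A_i\to$ letters converges to a bi-infinite word $t:\mathbb{Z}\to$ letters if for every $k\in\mathbb{Z}$ there is $L$ with $k\in A_i$ and $t_i(k)=t(k)$ for all $i\ge L$. An $X$-factorization of a bi-infinite word $t$ is a representation $t = \cdots x_{-2}x_{-1}p\,|\,q\,x_1x_2\cdots$ (with the bar marking position $0$) where all $x_j\in X$, $pq\in X$ and $q\neq\varepsilon$; it is recorded as the sequence $(\dots,x_{-2},x_{-1},p\,|\,q,x_1,x_2,\dots)$, and two factorizations are different if these sequences differ. *)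

theory Defs
  imports Main "HOL-Library.Sublist"
begin

definition star :: "'a list set \<Rightarrow> 'a list set" where
  "star X = {concat xs | xs. set xs \<subseteq> X}"

definition sync_word :: "'a list set \<Rightarrow> 'a list \<Rightarrow> bool" where
  "sync_word X w \<longleftrightarrow> (\<exists>w1 w2. w = w1 @ w2 \<and>
     (\<forall>p s. p @ w @ s \<in> star X \<longrightarrow> p @ w1 \<in> star X \<and> w2 @ s \<in> star X))"

definition has_interp :: "'a list set \<Rightarrow> 'a list \<Rightarrow> bool" where
  "has_interp X w \<longleftrightarrow> (\<exists>ws. ws \<noteq> [] \<and> concat ws = w \<and>
     (\<exists>x\<in>X. suffix (hd ws) x) \<and> (\<exists>x\<in>X. prefix (last ws) x) \<and>
     (\<forall>j. 0 < j \<and> j < length ws - 1 \<longrightarrow> ws ! j \<in> X))"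

definition shifted :: "'a list \<Rightarrow> 'a list \<Rightarrow> int \<Rightarrow> 'a option" where
  "shifted u v k =
     (if - int (length u) \<le> k \<and> k < 0 then Some (u ! nat (int (length u) + k))
      else if 0 \<le> k \<and> k < int (length v) then Some (v ! nat k)
      else None)"

definition converges_to :: "(nat \<Rightarrow> int \<Rightarrow> 'a option) \<Rightarrow> (int \<Rightarrow> 'a) \<Rightarrow> bool" where
  "converges_to s t \<longleftrightarrow> (\<forall>k. \<exists>L. \<forall>i\<ge>L. s i k = Some (t k))"

definition slice :: "(int \<Rightarrow> 'a) \<Rightarrow> int \<Rightarrow> nat \<Rightarrow> 'a list" where
  "slice t a n = map (\<lambda>i. t (a + int i)) [0..<n]"

text \<open>X-factorization t = ... x_{-2} x_{-1} p | q x_1 x_2 ...; the word x 0 is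
not part of the factorization (the middle block is the pair (p,q)).\<close>

definition right_part :: "(int \<Rightarrow> 'a list) \<Rightarrow> 'a list \<Rightarrow> nat \<Rightarrow> 'a list" where
  "right_part x q n = q @ concat (map (\<lambda>j. x (int j)) [1..<Suc n])"

definition left_part :: "(int \<Rightarrow> 'a list) \<Rightarrow> 'a list \<Rightarrow> nat \<Rightarrow> 'a list" where
  "left_part x p n = concat (map (\<lambda>j. x (- int j)) (rev [1..<Suc n])) @ p"

definition is_Xfact :: "'a list set \<Rightarrow> (int \<Rightarrow> 'a) \<Rightarrow> (int \<Rightarrow> 'a list) \<Rightarrow> 'a list \<Rightarrow> 'a list \<Rightarrow> bool" where
  "is_Xfact X t x p q \<longleftrightarrow>
     (\<forall>j. j \<noteq> 0 \<longrightarrow> x j \<in> X) \<and> p @ q \<in> X \<and> q \<noteq> [] \<and>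
     (\<forall>n. slice t 0 (length (right_part x q n)) = right_part x q n) \<and>
     (\<forall>n. slice t (- int (length (left_part x p n))) (length (left_part x p n)) = left_part x p n) \<and>
     (\<forall>m. \<exists>n. m \<le> length (right_part x q n)) \<and>
     (\<forall>m. \<exists>n. m \<le> length (left_part x p n))"

definition two_Xfacts :: "'a list set \<Rightarrow> (int \<Rightarrow> 'a) \<Rightarrow> bool" where
  "two_Xfacts X t \<longleftrightarrow> (\<exists>x p q x' p' q'. is_Xfact X t x p q \<and> is_Xfact X t x' p' q' \<and>
     ((p, q) \<noteq> (p', q') \<or> (\<exists>j. j \<noteq> 0 \<and> x j \<noteq> x' j)))"

end

theory Submission
  imports Defs "HOL-Library.Diagonal_Subsequence" "HOL-Library.Countable" "HOL-Library.Infinite_Set"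
begin

(* Cut w_i into factors twice: along an X-interpretation, and along a factorization of
   p w_i s in X* that witnesses that the split w_i = u_i v_i (taken at an interpretation cut
   near the middle) is not synchronizing. Relative to the split, the first set of cut points
   contains 0 and the second does not, and on a window of radius about |w_i|/2 both sets have
   gaps at most M = max |x| and cut out words of X. Over the finite alphabet a diagonal
   argument gives a subsequence along which the letters and both cut sets converge pointwise.
   The limit sets still have bounded gaps and cut out words of X, so they are the cut points
   of two X-factorizations of the limit word, which differ at position 0. *)

section \<open>Slices and cut sets\<close>

lemma length_slice [simp]: "length (slice t a n) = n"
  by (simp add: slice_def)

lemma nth_slice [simp]: "i < n \<Longrightarrow> slice t a n ! i = t (a + int i)"
  by (simp add: slice_def)

lemma slice_eq_Nil_iff [simp]: "slice t a n = [] \<longleftrightarrow> n = 0"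
  by (simp add: slice_def)

lemma slice_split:
  assumes "a \<le> b" "b \<le> c"
  shows "slice t a (nat (c - a)) = slice t a (nat (b - a)) @ slice t b (nat (c - b))"
  using assms by (intro nth_equalityI) (auto simp: nth_append add.commute)

lemma slice_cong:
  assumes "\<And>i. a \<le> i \<Longrightarrow> i < a + int n \<Longrightarrow> t i = t' i"
  shows "slice t a n = slice t' a n"
  using assms by (intro nth_equalityI) auto

(* C holds the cut points of an X-factorization of t, as seen through the window [lo, hi].
   The gap bound M is what keeps cut points from escaping to infinity in a pointwise limit. *)
definition cut_set_on :: "'a list set \<Rightarrow> nat \<Rightarrow> (int \<Rightarrow> 'a) \<Rightarrow> int set \<Rightarrow> int \<Rightarrow> int \<Rightarrow> bool" where
  "cut_set_on X M t C lo hi \<longleftrightarrow>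
     (\<forall>k. lo \<le> k \<and> k + int M \<le> hi \<longrightarrow> (\<exists>c\<in>C. k < c \<and> c \<le> k + int M)) \<and>
     (\<forall>c\<in>C. \<forall>c'\<in>C. lo \<le> c \<and> c < c' \<and> c' \<le> hi \<and> (\<forall>d\<in>C. \<not> (c < d \<and> d < c')) \<longrightarrow>
        slice t c (nat (c' - c)) \<in> X)"

lemma cut_set_onD_gap:
  assumes "cut_set_on X M t C lo hi" "lo \<le> k" "k + int M \<le> hi"
  shows "\<exists>c\<in>C. k < c \<and> c \<le> k + int M"
  using assms unfolding cut_set_on_def by blast

lemma cut_set_onD_piece:
  assumes "cut_set_on X M t C lo hi" "c \<in> C" "c' \<in> C" "lo \<le> c" "c < c'" "c' \<le> hi"
    and "\<forall>d\<in>C. \<not> (c < d \<and> d < c')"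
  shows "slice t c (nat (c' - c)) \<in> X"
  using assms unfolding cut_set_on_def by blast

lemma cut_set_on_mono:
  assumes "cut_set_on X M t C lo hi" "lo \<le> lo'" "hi' \<le> hi"
  shows "cut_set_on X M t C lo' hi'"
proof -
  have "lo \<le> k \<and> k + int M \<le> hi" if "lo' \<le> k \<and> k + int M \<le> hi'" for k
    using that assms(2,3) by linarith
  moreover have "lo \<le> c \<and> c < c' \<and> c' \<le> hi" if "lo' \<le> c \<and> c < c' \<and> c' \<le> hi'" for c c'
    using that assms(2,3) by linarith
  ultimately show ?thesis
    using assms(1) unfolding cut_set_on_def by blast
qed

lemma cut_set_on_cong:
  assumes "cut_set_on X M t C lo hi"
    and "\<And>k. lo \<le> k \<Longrightarrow> k \<le> hi \<Longrightarrow> t k = t' k \<and> (k \<in> C \<longleftrightarrow> k \<in> C')"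
  shows "cut_set_on X M t' C' lo hi"
  unfolding cut_set_on_def
proof (intro conjI allI impI ballI)
  fix k assume k: "lo \<le> k \<and> k + int M \<le> hi"
  then obtain c where "c \<in> C" "k < c" "c \<le> k + int M"
    using assms(1) unfolding cut_set_on_def by blast
  with k assms(2)[of c] show "\<exists>c\<in>C'. k < c \<and> c \<le> k + int M" by auto
next
  fix c c' assume c: "c \<in> C'" "c' \<in> C'"
    and between: "lo \<le> c \<and> c < c' \<and> c' \<le> hi \<and> (\<forall>d\<in>C'. \<not> (c < d \<and> d < c'))"
  then have "c \<in> C" "c' \<in> C" "\<forall>d\<in>C. \<not> (c < d \<and> d < c')"
    using assms(2) by force+
  with between have "slice t c (nat (c' - c)) \<in> X"
    using assms(1) unfolding cut_set_on_def by blast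
  moreover have "slice t c (nat (c' - c)) = slice t' c (nat (c' - c))"
    using between assms(2) by (intro slice_cong) auto
  ultimately show "slice t' c (nat (c' - c)) \<in> X" by simp
qed

section \<open>Factorizations from cut sets\<close>

lemma int_increasing_gap:
  fixes f :: "int \<Rightarrow> int"
  assumes "\<And>j. f j < f (j + 1)" "j \<le> k"
  shows "f j + (k - j) \<le> f k"
  using assms(2)
proof (induction k rule: int_ge_induct)
  case (step i)
  then show ?case using assms(1)[of i] by simp
qed simp

lemma int_set_enumeration:
  fixes C :: "int set"
  assumes above: "\<And>k. \<exists>c\<in>C. k < c" and below: "\<And>k. \<exists>c\<in>C. c \<le> k"
  obtains e :: "int \<Rightarrow> int" where "strict_mono e" "range e = C" "e 0 \<le> 0" "0 < e 1"
proof -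
  define R where "R = {n. 0 < n \<and> int n \<in> C}"
  define L where "L = {n. - int n \<in> C}"
  have "infinite R"
    unfolding infinite_nat_iff_unbounded
  proof
    fix m
    obtain c where "c \<in> C" "int m < c" using above by blast
    then show "\<exists>n>m. n \<in> R" unfolding R_def by (intro exI[of _ "nat c"]) auto
  qed
  have "infinite L"
    unfolding infinite_nat_iff_unbounded
  proof
    fix m
    obtain c where "c \<in> C" "c \<le> - int m - 1" using below by blast
    then show "\<exists>n>m. n \<in> L" unfolding L_def by (intro exI[of _ "nat (- c)"]) auto
  qed
  define e where
    "e j = (if 0 < j then int (enumerate R (nat j - 1)) else - int (enumerate L (nat (- j))))" for j
  have R: "0 < enumerate R n \<and> int (enumerate R n) \<in> C" for n
    using enumerate_in_set[OF \<open>infinite R\<close>] unfolding R_def by blast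
  have L: "- int (enumerate L n) \<in> C" for n
    using enumerate_in_set[OF \<open>infinite L\<close>] unfolding L_def by blast
  have step: "e j < e (j + 1)" for j
  proof -
    consider "j < 0" | "j = 0" | "0 < j" by linarith
    then show ?thesis
    proof cases
      case 1
      then have "nat (- j) = Suc (nat (- (j + 1)))" by simp
      then show ?thesis
        using 1 enumerate_step[OF \<open>infinite L\<close>, of "nat (- (j + 1))"] by (simp add: e_def)
    next
      case 2
      then show ?thesis using R[of 0] by (simp add: e_def)
    next
      case 3
      then have "nat (j + 1) - 1 = Suc (nat j - 1)" by simp
      then show ?thesis
        using 3 enumerate_step[OF \<open>infinite R\<close>, of "nat j - 1"] by (simp add: e_def)
    qed
  qed
  have "strict_mono e"
  proof (rule strict_monoI)
    fix j k :: int assume "j < k"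
    then show "e j < e k" using int_increasing_gap[of e j k, OF step] by linarith
  qed
  moreover have "range e = C"
  proof
    show "range e \<subseteq> C" using R L by (auto simp: e_def)
  next
    show "C \<subseteq> range e"
    proof
      fix c assume "c \<in> C"
      show "c \<in> range e"
      proof (cases "0 < c")
        case True
        with \<open>c \<in> C\<close> have "nat c \<in> R" by (simp add: R_def)
        then obtain n where "enumerate R n = nat c" using enumerate_Ex[OF \<open>infinite R\<close>] by blast
        with True have "e (int n + 1) = c" by (simp add: e_def nat_add_distrib)
        then show ?thesis by (metis rangeI)
      next
        case False
        with \<open>c \<in> C\<close> have "nat (- c) \<in> L" by (simp add: L_def)
        then obtain n where "enumerate L n = nat (- c)" using enumerate_Ex[OF \<open>infinite L\<close>] by blast
        with False have "e (- int n) = c" by (simp add: e_def)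
        then show ?thesis by (metis rangeI)
      qed
    qed
  qed
  moreover have "e 0 \<le> 0" "0 < e 1" using R[of 0] by (simp_all add: e_def)
  ultimately show thesis by (rule that)
qed

lemma Xfact_of_cut_enumeration:
  fixes e :: "int \<Rightarrow> int"
  assumes "strict_mono e" "e 0 \<le> 0" "0 < e 1"
    and pieces: "\<And>j. slice t (e j) (nat (e (j + 1) - e j)) \<in> X"
  shows "\<exists>x. is_Xfact X t x (slice t (e 0) (nat (- e 0))) (slice t 0 (nat (e 1)))"
proof -
  define piece where "piece j = slice t (e j) (nat (e (j + 1) - e j))" for j
  \<comment> \<open>the factor straddling position 0 is split into p and q, so piece itself serves as x\<close>
  define p where "p = slice t (e 0) (nat (- e 0))"
  define q where "q = slice t 0 (nat (e 1))"
  have step: "e j < e (j + 1)" for j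
    using strict_monoD[OF \<open>strict_mono e\<close>] by simp
  have grow: "e j + (k - j) \<le> e k" if "j \<le> k" for j k
    using int_increasing_gap[of e, OF step that] .
  have right: "right_part piece q n = slice t 0 (nat (e (int n + 1)))" for n
  proof (induction n)
    case 0
    then show ?case by (simp add: right_part_def q_def)
  next
    case (Suc n)
    have "0 \<le> e (int n + 1)" "e (int n + 1) \<le> e (int n + 2)"
      using grow[of 1 "int n + 1"] grow[of "int n + 1" "int n + 2"] \<open>0 < e 1\<close> by simp_all
    have "right_part piece q (Suc n) = right_part piece q n @ piece (int n + 1)"
      by (simp add: right_part_def add.commute)
    also have "\<dots> = slice t 0 (nat (e (int n + 1))) @ piece (int n + 1)"
      using Suc.IH by simp
    also have "\<dots> = slice t 0 (nat (e (int n + 2)))"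
      using slice_split[of 0 "e (int n + 1)" "e (int n + 2)" t] \<open>0 \<le> e (int n + 1)\<close>
        \<open>e (int n + 1) \<le> e (int n + 2)\<close> by (simp add: piece_def add.assoc)
    finally show ?case by (simp add: ac_simps)
  qed
  have left: "left_part piece p n = slice t (e (- int n)) (nat (- e (- int n)))" for n
  proof (induction n)
    case 0
    then show ?case by (simp add: left_part_def p_def)
  next
    case (Suc n)
    have "e (- int (Suc n)) \<le> e (- int n)" "e (- int n) \<le> 0"
      using grow[of "- int (Suc n)" "- int n"] grow[of "- int n" 0] \<open>e 0 \<le> 0\<close> by simp_all
    have "left_part piece p (Suc n) = piece (- int (Suc n)) @ left_part piece p n"
      by (simp add: left_part_def)
    also have "\<dots> = piece (- int (Suc n)) @ slice t (e (- int n)) (nat (- e (- int n)))"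
      using Suc.IH by simp
    also have "\<dots> = slice t (e (- int (Suc n))) (nat (- e (- int (Suc n))))"
      using slice_split[of "e (- int (Suc n))" "e (- int n)" 0 t] \<open>e (- int (Suc n)) \<le> e (- int n)\<close>
        \<open>e (- int n) \<le> 0\<close> by (simp add: piece_def)
    finally show ?case .
  qed
  have "is_Xfact X t piece p q"
    unfolding is_Xfact_def
  proof (intro conjI allI impI)
    show "piece j \<in> X" for j by (simp add: piece_def pieces)
    show "p @ q \<in> X"
      using slice_split[of "e 0" 0 "e 1" t] assms(2,3) pieces[of 0] by (simp add: p_def q_def)
    show "q \<noteq> []" using \<open>0 < e 1\<close> by (simp add: q_def)
    show "slice t 0 (length (right_part piece q n)) = right_part piece q n" for n
      by (simp add: right)
    show "slice t (- int (length (left_part piece p n))) (length (left_part piece p n)) =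
        left_part piece p n" for n
      using grow[of "- int n" 0] \<open>e 0 \<le> 0\<close> by (simp add: left)
    show "\<exists>n. m \<le> length (right_part piece q n)" for m
      using grow[of 1 "int m + 1"] \<open>0 < e 1\<close> by (intro exI[of _ m]) (simp add: right)
    show "\<exists>n. m \<le> length (left_part piece p n)" for m
      using grow[of "- int m" 0] \<open>e 0 \<le> 0\<close> by (intro exI[of _ m]) (simp add: left)
  qed
  then show ?thesis unfolding p_def q_def by - (rule exI, assumption)
qed

lemma Xfact_of_cut_set:
  assumes "\<And>r. cut_set_on X M t C (- r) r"
  obtains x p q where "is_Xfact X t x p q" "p = [] \<longleftrightarrow> 0 \<in> C"
proof -
  have gap: "\<exists>c\<in>C. k < c \<and> c \<le> k + int M" for k
    by (rule cut_set_onD_gap[OF assms[of "\<bar>k\<bar> + int M"]]) linarith+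
  have pieces: "slice t c (nat (c' - c)) \<in> X"
    if "c \<in> C" "c' \<in> C" "c < c'" "\<forall>d\<in>C. \<not> (c < d \<and> d < c')" for c c'
    by (rule cut_set_onD_piece[OF assms[of "\<bar>c\<bar> + \<bar>c'\<bar>"] that(1,2) _ that(3) _ that(4)])
      (use that(3) in linarith)+
  have below: "\<exists>c\<in>C. c \<le> k" for k
  proof -
    obtain c where "c \<in> C" "c \<le> k - int M - 1 + int M" using gap[of "k - int M - 1"] by blast
    then show ?thesis by (intro bexI[of _ c]) auto
  qed
  have above: "\<exists>c\<in>C. k < c" for k
    using gap[of k] by auto
  obtain e :: "int \<Rightarrow> int" where e: "strict_mono e" "range e = C" "e 0 \<le> 0" "0 < e 1"
    using int_set_enumeration[OF above below] by blast
  have "slice t (e j) (nat (e (j + 1) - e j)) \<in> X" for j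
  proof (rule pieces)
    show "e j \<in> C" "e (j + 1) \<in> C" using e(2) by auto
    show "e j < e (j + 1)" using strict_monoD[OF e(1)] by simp
    show "\<forall>d\<in>C. \<not> (e j < d \<and> d < e (j + 1))"
    proof
      fix d assume "d \<in> C"
      then obtain m where "d = e m" using e(2) by auto
      then show "\<not> (e j < d \<and> d < e (j + 1))" using strict_mono_less[OF e(1)] by simp
    qed
  qed
  then obtain x where fact: "is_Xfact X t x (slice t (e 0) (nat (- e 0))) (slice t 0 (nat (e 1)))"
    using Xfact_of_cut_enumeration[OF e(1,3,4)] by blast
  have "e 0 = 0 \<longleftrightarrow> 0 \<in> C"
  proof
    assume "0 \<in> C"
    then obtain m where "e m = 0" using e(2) by auto
    with e(3,4) have "e 0 \<le> e m" "e m < e 1" by simp_all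
    then have "m = 0"
      using strict_mono_less_eq[OF e(1)] strict_mono_less[OF e(1)] by simp
    with \<open>e m = 0\<close> show "e 0 = 0" by simp
  qed (use e(2) in auto)
  with e(3) have "slice t (e 0) (nat (- e 0)) = [] \<longleftrightarrow> 0 \<in> C"
    by auto
  with fact show thesis by (rule that)
qed

section \<open>Cut sets of finite factorizations\<close>

definition piece_start :: "'a list list \<Rightarrow> nat \<Rightarrow> nat" where
  "piece_start ws j = length (concat (take j ws))"

definition cut_positions :: "'a list list \<Rightarrow> int \<Rightarrow> int set" where
  "cut_positions ws off = (\<lambda>j. off + int (piece_start ws j)) ` {..length ws}"

lemma piece_start_0 [simp]: "piece_start ws 0 = 0"
  by (simp add: piece_start_def)

lemma piece_start_length [simp]: "piece_start ws (length ws) = length (concat ws)"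
  by (simp add: piece_start_def)

lemma piece_start_Suc: "j < length ws \<Longrightarrow> piece_start ws (Suc j) = piece_start ws j + length (ws ! j)"
  by (simp add: piece_start_def take_Suc_conv_app_nth)

lemma piece_start_mono: "j \<le> j' \<Longrightarrow> piece_start ws j \<le> piece_start ws j'"
  unfolding piece_start_def
  by (metis concat_append length_append le_add1 le_Suc_ex take_add)

lemma piece_start_locate:
  "k < length (concat ws) \<Longrightarrow> \<exists>j<length ws. piece_start ws j \<le> k \<and> k < piece_start ws (Suc j)"
proof (induction ws arbitrary: k)
  case (Cons y ys)
  show ?case
  proof (cases "k < length y")
    case True
    then show ?thesis by (intro exI[of _ 0]) (simp add: piece_start_def)
  next
    case False
    with Cons.prems have "k - length y < length (concat ys)" by simp
    then obtain j where "j < length ys"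
      "piece_start ys j \<le> k - length y" "k - length y < piece_start ys (Suc j)"
      using Cons.IH by blast
    with False show ?thesis
      by (intro exI[of _ "Suc j"]) (auto simp: piece_start_def)
  qed
qed simp

lemma nth_concat_piece_start:
  assumes "j < length ws" "i < length (ws ! j)"
  shows "concat ws ! (piece_start ws j + i) = ws ! j ! i"
proof -
  have "concat ws = concat (take j ws) @ ws ! j @ concat (drop (Suc j) ws)"
    using assms(1) by (metis concat.simps(2) concat_append id_take_nth_drop)
  then show ?thesis using assms by (simp add: piece_start_def nth_append)
qed

lemma piece_start_near:
  assumes "\<forall>y\<in>set ws. length y \<le> M" "h \<le> length (concat ws)"
  obtains j where "j \<le> length ws" "piece_start ws j \<le> h" "h \<le> piece_start ws j + M"
proof (cases "h < length (concat ws)")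
  case True
  then obtain j where "j < length ws" "piece_start ws j \<le> h" "h < piece_start ws (Suc j)"
    using piece_start_locate by blast
  moreover have "length (ws ! j) \<le> M" using assms(1) \<open>j < length ws\<close> by simp
  ultimately show thesis using piece_start_Suc[of j ws] by (intro that[of j]) auto
next
  case False
  then show thesis using assms(2) by (intro that[of "length ws"]) auto
qed

lemma cut_positions_consecutive:
  assumes "c \<in> cut_positions ws off" "c' \<in> cut_positions ws off" "c < c'"
    and "\<forall>d\<in>cut_positions ws off. \<not> (c < d \<and> d < c')"
  obtains j where "j < length ws" "c = off + int (piece_start ws j)"
    "c' = off + int (piece_start ws (Suc j))"
proof -
  obtain j1 j2 where j: "j1 \<le> length ws" "c = off + int (piece_start ws j1)"
    "j2 \<le> length ws" "c' = off + int (piece_start ws j2)"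
    using assms(1,2) by (auto simp: cut_positions_def)
  have "piece_start ws j1 < length (concat ws)"
    using j assms(3) piece_start_mono[of j2 "length ws" ws] by simp
  then obtain j where "j < length ws" "piece_start ws j \<le> piece_start ws j1"
    "piece_start ws j1 < piece_start ws (Suc j)"
    using piece_start_locate by blast
  then have start: "piece_start ws j = piece_start ws j1"
    using piece_start_mono[of j1 j ws] piece_start_mono[of "Suc j" j1 ws] by (cases "j1 \<le> j") auto
  have next_cut: "off + int (piece_start ws (Suc j)) \<in> cut_positions ws off"
    using \<open>j < length ws\<close> by (auto simp: cut_positions_def)
  have "c' \<le> off + int (piece_start ws (Suc j))"
    using assms(4) next_cut j(2) \<open>piece_start ws j1 < piece_start ws (Suc j)\<close> by force
  moreover have "off + int (piece_start ws (Suc j)) \<le> c'"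
    using piece_start_mono[of j2 j ws] piece_start_mono[of "Suc j" j2 ws] j start assms(3)
    by (cases "j2 \<le> j") auto
  ultimately show thesis
    using \<open>j < length ws\<close> j(2) start by (intro that[of j]) auto
qed

lemma cut_set_on_concat:
  assumes "\<forall>y\<in>set ws. length y \<le> M" "0 < M"
    and inner: "\<And>j. j < length ws \<Longrightarrow> lo \<le> off + int (piece_start ws j) \<Longrightarrow>
        off + int (piece_start ws (Suc j)) \<le> hi \<Longrightarrow> ws ! j \<in> X"
    and letters: "\<And>k. lo \<le> k \<Longrightarrow> k < hi \<Longrightarrow> t k = concat ws ! nat (k - off)"
    and "off \<le> lo" "hi \<le> off + int (length (concat ws))"
  shows "cut_set_on X M t (cut_positions ws off) lo hi"
  unfolding cut_set_on_def
proof (intro conjI allI impI ballI)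
  fix k assume k: "lo \<le> k \<and> k + int M \<le> hi"
  then have "nat (k - off) < length (concat ws)" using assms(2,5,6) by linarith
  then obtain j where j: "j < length ws" "piece_start ws j \<le> nat (k - off)"
    "nat (k - off) < piece_start ws (Suc j)"
    using piece_start_locate by blast
  have "piece_start ws (Suc j) \<le> piece_start ws j + M"
    using piece_start_Suc[OF j(1)] assms(1) j(1) by simp
  moreover have "off + int (piece_start ws (Suc j)) \<in> cut_positions ws off"
    using j(1) by (auto simp: cut_positions_def)
  ultimately show "\<exists>c\<in>cut_positions ws off. k < c \<and> c \<le> k + int M"
    using j k assms(5) by (intro bexI[of _ "off + int (piece_start ws (Suc j))"]) auto
next
  fix c c' assume c: "c \<in> cut_positions ws off" "c' \<in> cut_positions ws off"
    and between: "lo \<le> c \<and> c < c' \<and> c' \<le> hi \<and> (\<forall>d\<in>cut_positions ws off. \<not> (c < d \<and> d < c'))"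
  then obtain j where j: "j < length ws" "c = off + int (piece_start ws j)"
    "c' = off + int (piece_start ws (Suc j))"
    using cut_positions_consecutive by blast
  have len: "c' - c = int (length (ws ! j))" using j piece_start_Suc[OF j(1)] by simp
  have "slice t c (nat (c' - c)) = ws ! j"
  proof (rule nth_equalityI)
    fix i assume "i < length (slice t c (nat (c' - c)))"
    then have i: "i < length (ws ! j)" using len by simp
    then have "lo \<le> c + int i" "c + int i < hi" using between len by linarith+
    then have "t (c + int i) = concat ws ! (piece_start ws j + i)"
      using letters[of "c + int i"] j(2) by (simp add: nat_add_distrib)
    then show "slice t c (nat (c' - c)) ! i = ws ! j ! i"
      using nth_concat_piece_start[OF j(1) i] i len by simp
  qed (simp add: len)
  then show "slice t c (nat (c' - c)) \<in> X" using inner j between by simp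
qed

lemma has_interp_factors:
  assumes "has_interp X w"
  obtains ws where "concat ws = w" "\<forall>y\<in>set ws. \<exists>x\<in>X. sublist y x"
    "\<And>j. 0 < j \<Longrightarrow> j < length ws - 1 \<Longrightarrow> ws ! j \<in> X"
proof -
  obtain ws where ws: "ws \<noteq> []" "concat ws = w" "\<exists>x\<in>X. suffix (hd ws) x" "\<exists>x\<in>X. prefix (last ws) x"
    "\<forall>j. 0 < j \<and> j < length ws - 1 \<longrightarrow> ws ! j \<in> X"
    using assms unfolding has_interp_def by blast
  have "\<exists>x\<in>X. sublist (ws ! j) x" if "j < length ws" for j
  proof (cases "j = 0 \<or> j = length ws - 1")
    case True
    then show ?thesis using ws(1,3,4) by (auto simp: hd_conv_nth last_conv_nth)
  next
    case False
    then show ?thesis using ws(5) that by auto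
  qed
  then show thesis
    using ws(2,5) by (intro that) (auto simp: in_set_conv_nth)
qed

lemma has_interp_letters: "has_interp X w \<Longrightarrow> set w \<subseteq> \<Union> (set ` X)"
  by (erule has_interp_factors) (force dest: set_mono_sublist)

lemma shifted_eq_nth:
  assumes "- int (length u) \<le> k" "k < int (length v)"
  shows "shifted u v k = Some ((u @ v) ! nat (k + int (length u)))"
proof (cases "k < 0")
  case True
  then have "nat (k + int (length u)) < length u" using assms by linarith
  then show ?thesis using True assms by (simp add: shifted_def nth_append add.commute)
next
  case False
  then have "nat (k + int (length u)) = length u + nat k" by linarith
  then show ?thesis using False assms by (simp add: shifted_def)
qed

lemma has_interp_split_cut_set:
  assumes "has_interp X w" "\<forall>x\<in>X. length x \<le> M" "0 < M"
  defines "d \<equiv> int (length w div 2) - 2 * int M"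
  obtains u v C where "w = u @ v" "0 \<in> C" "d \<le> int (length u)" "d \<le> int (length v)"
    "cut_set_on X M (\<lambda>k. the (shifted u v k)) C (- d) d"
proof -
  obtain ws where ws: "concat ws = w" "\<forall>y\<in>set ws. \<exists>x\<in>X. sublist y x"
    "\<And>j. 0 < j \<Longrightarrow> j < length ws - 1 \<Longrightarrow> ws ! j \<in> X"
    using has_interp_factors[OF assms(1)] by blast
  have short: "\<forall>y\<in>set ws. length y \<le> M"
    using ws(2) assms(2) by (meson order_trans sublist_length_le)
  \<comment> \<open>The first and last factors need not lie in X; splitting at a cut near the middle
      and shrinking the radius by 2M keeps them outside the window.\<close>
  define h where "h = length w div 2"
  obtain j where j: "j \<le> length ws" "piece_start ws j \<le> h" "h \<le> piece_start ws j + M"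
    using piece_start_near[OF short, of h] ws(1) unfolding h_def by auto
  define u where "u = concat (take j ws)"
  define v where "v = concat (drop j ws)"
  have w: "w = u @ v" unfolding u_def v_def using ws(1) by (metis append_take_drop_id concat_append)
  have u: "length u = piece_start ws j" by (simp add: u_def piece_start_def)
  have d: "d = int h - 2 * int M" by (simp add: d_def h_def)
  have "length w = length u + length v" using w by simp
  then have du: "d + int M \<le> int (length u)" and dv: "d \<le> int (length v)"
    using j u d h_def by linarith+
  have cuts: "cut_set_on X M (\<lambda>k. the (shifted u v k)) (cut_positions ws (- int (length u))) (- d) d"
  proof (rule cut_set_on_concat[OF short \<open>0 < M\<close>])
    fix i assume i: "i < length ws" "- d \<le> - int (length u) + int (piece_start ws i)"
      "- int (length u) + int (piece_start ws (Suc i)) \<le> d"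
    have "0 < piece_start ws i" using i(2) du \<open>0 < M\<close> by linarith
    then have "0 < i" by (cases i) auto
    have "piece_start ws (Suc i) < piece_start ws (length ws)"
      using i(3) u d j \<open>0 < M\<close> \<open>length w = length u + length v\<close> ws(1) h_def by simp
    then have "i < length ws - 1"
      using piece_start_mono[of "length ws" "Suc i" ws] by linarith
    with \<open>0 < i\<close> show "ws ! i \<in> X" by (rule ws(3))
  next
    fix k assume "- d \<le> k" "k < d"
    then show "the (shifted u v k) = concat ws ! nat (k - - int (length u))"
      using shifted_eq_nth[of u k v] du dv ws(1) w by simp
  qed (use du dv w ws(1) in simp_all)
  have "0 \<in> cut_positions ws (- int (length u))"
    using j(1) u by (force simp: cut_positions_def)
  moreover have "d \<le> int (length u)" using du by linarith
  ultimately show thesis by (rule that[OF w _ _ dv cuts])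
qed

lemma star_split_at_piece_start:
  assumes "set xs \<subseteq> X" "concat xs = a @ b" "piece_start xs j = length a"
  shows "a \<in> star X" "b \<in> star X"
proof -
  have "concat (take j xs) @ concat (drop j xs) = a @ b"
    using assms(2) by (metis append_take_drop_id concat_append)
  moreover have "length (concat (take j xs)) = length a"
    using assms(3) by (simp add: piece_start_def)
  ultimately have "concat (take j xs) = a" "concat (drop j xs) = b"
    using append_eq_append_conv[of "concat (take j xs)" a "concat (drop j xs)" b] by blast+
  moreover have "set (take j xs) \<subseteq> X" "set (drop j xs) \<subseteq> X"
    using assms(1) by (meson set_take_subset set_drop_subset subset_trans)+
  ultimately show "a \<in> star X" "b \<in> star X"
    unfolding star_def by auto
qed

lemma not_sync_word_cut_set:
  assumes "\<not> sync_word X (u @ v)" "\<forall>x\<in>X. length x \<le> M" "0 < M"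
  obtains C where "0 \<notin> C"
    "cut_set_on X M (\<lambda>k. the (shifted u v k)) C (- int (length u)) (int (length v))"
proof -
  obtain p s where ps: "p @ (u @ v) @ s \<in> star X" "\<not> (p @ u \<in> star X \<and> v @ s \<in> star X)"
    using assms(1) unfolding sync_word_def by blast
  then obtain xs where xs: "concat xs = p @ u @ v @ s" "set xs \<subseteq> X"
    unfolding star_def by auto
  define off where "off = - int (length p) - int (length u)"
  have "0 \<notin> cut_positions xs off"
  proof
    assume "0 \<in> cut_positions xs off"
    then obtain j where "- int (length p) - int (length u) + int (piece_start xs j) = 0"
      by (auto simp: cut_positions_def off_def)
    then have "piece_start xs j = length (p @ u)" by simp
    then show False
      using star_split_at_piece_start[OF xs(2), of "p @ u" "v @ s"] xs(1) ps(2) by simp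
  qed
  moreover have "cut_set_on X M (\<lambda>k. the (shifted u v k)) (cut_positions xs off)
      (- int (length u)) (int (length v))"
  proof (rule cut_set_on_concat)
    show "\<forall>y\<in>set xs. length y \<le> M" using xs(2) assms(2) by blast
    show "0 < M" by fact
    show "xs ! j \<in> X" if "j < length xs" for j using that xs(2) by auto
    show "off \<le> - int (length u)" by (simp add: off_def)
    show "int (length v) \<le> off + int (length (concat xs))" using xs(1) by (simp add: off_def)
  next
    fix k assume k: "- int (length u) \<le> k" "k < int (length v)"
    then have "nat (k - off) = length p + nat (k + int (length u))" by (simp add: off_def)
    moreover have "nat (k + int (length u)) < length (u @ v)" using k by simp
    moreover have "concat xs = p @ ((u @ v) @ s)" using xs(1) by simp
    ultimately show "the (shifted u v k) = concat xs ! nat (k - off)"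
      using shifted_eq_nth[OF k] by (simp only: nth_append_length_plus nth_append_left option.sel)
  qed
  ultimately show thesis by (rule that)
qed

lemma split_with_two_cut_sets:
  fixes w :: "nat \<Rightarrow> 'a list" and rad :: "nat \<Rightarrow> int"
  assumes "\<forall>i. has_interp X (w i)" "\<forall>i. \<not> sync_word X (w i)" "\<forall>x\<in>X. length x \<le> M" "0 < M"
    and rad: "\<And>i. rad i = int (length (w i) div 2) - 2 * int M"
  obtains U V C1 C2 where "\<And>i. w i = U i @ V i" "\<And>i. 0 \<in> C1 i" "\<And>i. 0 \<notin> C2 i"
    "\<And>i. rad i \<le> int (length (U i))" "\<And>i. rad i \<le> int (length (V i))"
    "\<And>i. cut_set_on X M (\<lambda>k. the (shifted (U i) (V i) k)) (C1 i) (- rad i) (rad i)"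
    "\<And>i. cut_set_on X M (\<lambda>k. the (shifted (U i) (V i) k)) (C2 i) (- rad i) (rad i)"
proof -
  define split_at where "split_at i u v C1 C2 \<longleftrightarrow> w i = u @ v \<and> 0 \<in> C1 \<and> 0 \<notin> C2 \<and>
      rad i \<le> int (length u) \<and> rad i \<le> int (length v) \<and>
      cut_set_on X M (\<lambda>k. the (shifted u v k)) C1 (- rad i) (rad i) \<and>
      cut_set_on X M (\<lambda>k. the (shifted u v k)) C2 (- rad i) (rad i)" for i u v C1 C2
  have "\<exists>u v C1 C2. split_at i u v C1 C2" for i
  proof -
    obtain u v C1 where split: "w i = u @ v" "0 \<in> C1"
      "rad i \<le> int (length u)" "rad i \<le> int (length v)"
      "cut_set_on X M (\<lambda>k. the (shifted u v k)) C1 (- rad i) (rad i)"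
      using has_interp_split_cut_set[OF assms(1)[rule_format, of i] assms(3,4), folded rad] by blast
    have "\<not> sync_word X (u @ v)" using assms(2) split(1) by metis
    then obtain C2 where "0 \<notin> C2" and whole:
      "cut_set_on X M (\<lambda>k. the (shifted u v k)) C2 (- int (length u)) (int (length v))"
      using not_sync_word_cut_set[OF _ assms(3,4)] by blast
    have "cut_set_on X M (\<lambda>k. the (shifted u v k)) C2 (- rad i) (rad i)"
      by (rule cut_set_on_mono[OF whole]) (use split(3,4) in linarith)+
    with split \<open>0 \<notin> C2\<close> show ?thesis
      unfolding split_at_def by blast
  qed
  then obtain U V C1 C2 where split: "\<And>i. split_at i (U i) (V i) (C1 i) (C2 i)" by metis
  show thesis
    by (rule that[of U V C1 C2]) (use split in \<open>simp_all add: split_at_def\<close>)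
qed

section \<open>Passing to the limit\<close>

lemma pointwise_convergent_subseq:
  fixes g :: "nat \<Rightarrow> 'c::countable \<Rightarrow> 'b"
  assumes "\<And>k. finite (range (\<lambda>i. g i k))"
  obtains \<phi> :: "nat \<Rightarrow> nat" and h
  where "strict_mono \<phi>" "\<And>k. eventually (\<lambda>i. g (\<phi> i) k = h k) sequentially"
proof -
  define P where "P n s \<longleftrightarrow> (\<exists>c. \<forall>i. g (s i) (from_nat n) = c)" for n and s :: "nat \<Rightarrow> nat"
  interpret subseqs P
  proof
    fix n and s :: "nat \<Rightarrow> nat"
    have "finite ((\<lambda>i. g (s i) (from_nat n)) ` UNIV)"
      by (rule finite_subset[OF _ assms]) auto
    then obtain a where "infinite {i. g (s i) (from_nat n) = g (s a) (from_nat n)}"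
      using pigeonhole_infinite[OF infinite_UNIV_nat] by auto
    from infinite_enumerate[OF this] obtain r :: "nat \<Rightarrow> nat"
      where "strict_mono r" "\<forall>m. g (s (r m)) (from_nat n) = g (s a) (from_nat n)"
      by blast
    then show "\<exists>r. strict_mono r \<and> P n (s \<circ> r)"
      unfolding P_def by auto
  qed
  have "P n (diagseq \<circ> (+) (Suc n))" for n
    by (rule diagseq_holds) (auto simp: P_def)
  then obtain h where h: "\<And>n i. g (diagseq (Suc n + i)) (from_nat n) = h n"
    unfolding P_def comp_def by metis
  show thesis
  proof (rule that[OF subseq_diagseq])
    fix k
    have "g (diagseq i) k = h (to_nat k)" if "Suc (to_nat k) \<le> i" for i
      using h[of "to_nat k" "i - Suc (to_nat k)"] that by simp
    then show "eventually (\<lambda>i. g (diagseq i) k = h (to_nat k)) sequentially"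
      unfolding eventually_sequentially by blast
  qed
qed

lemma converges_to_iff_eventually:
  "converges_to s t \<longleftrightarrow> (\<forall>k. eventually (\<lambda>i. s i k = Some (t k)) sequentially)"
  by (simp add: converges_to_def eventually_sequentially)

lemma shifted_in_letters: "shifted u v k \<in> insert None (Some ` set (u @ v))"
  unfolding shifted_def by auto

lemma shifted_convergent_subseq:
  fixes u v :: "nat \<Rightarrow> 'a list" and rad :: "nat \<Rightarrow> int" and lab :: "nat \<Rightarrow> int \<Rightarrow> 'c::finite"
  assumes "finite A" "\<And>i. set (u i @ v i) \<subseteq> A"
    and "\<And>i. rad i \<le> int (length (u i))" "\<And>i. rad i \<le> int (length (v i))"
    and "filterlim rad at_top sequentially"
  obtains \<phi> t l where "strict_mono \<phi>" "converges_to (\<lambda>i. shifted (u (\<phi> i)) (v (\<phi> i))) t"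
    "\<And>k. eventually (\<lambda>i. lab (\<phi> i) k = l k) sequentially"
proof -
  \<comment> \<open>lab carries finitely many extra labels per position that converge along the same subsequence\<close>
  define g where "g i k = (shifted (u i) (v i) k, lab i k)" for i k
  have "finite (range (\<lambda>i. g i k))" for k
  proof (rule finite_subset)
    show "range (\<lambda>i. g i k) \<subseteq> insert None (Some ` A) \<times> UNIV"
      using shifted_in_letters assms(2) by (fastforce simp: g_def)
  qed (use assms(1) in simp)
  then obtain \<phi> :: "nat \<Rightarrow> nat" and h
    where \<phi>: "strict_mono \<phi>" and h: "\<And>k. eventually (\<lambda>i. g (\<phi> i) k = h k) sequentially"
    using pointwise_convergent_subseq by blast
  have rad: "filterlim (\<lambda>i. rad (\<phi> i)) at_top sequentially"
    using filterlim_compose[OF assms(5) filterlim_subseq[OF \<phi>]] .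
  have "eventually (\<lambda>i. shifted (u (\<phi> i)) (v (\<phi> i)) k = Some (the (fst (h k)))) sequentially" for k
  proof -
    have "eventually (\<lambda>i. \<bar>k\<bar> + 1 \<le> rad (\<phi> i)) sequentially"
      using rad unfolding filterlim_at_top by blast
    with h[of k] show ?thesis
    proof eventually_elim
      case (elim i)
      have "- int (length (u (\<phi> i))) \<le> k" "k < int (length (v (\<phi> i)))"
        using elim(2) assms(3,4)[of "\<phi> i"] abs_ge_self[of k] abs_ge_minus_self[of k] by linarith+
      then have "shifted (u (\<phi> i)) (v (\<phi> i)) k \<noteq> None"
        using shifted_eq_nth[of "u (\<phi> i)" k "v (\<phi> i)"] by simp
      moreover have "fst (h k) = shifted (u (\<phi> i)) (v (\<phi> i)) k"
        using elim(1) unfolding g_def by (metis fst_conv)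
      ultimately show ?case by auto
    qed
  qed
  moreover have "eventually (\<lambda>i. lab (\<phi> i) k = snd (h k)) sequentially" for k
    using h[of k] unfolding g_def by eventually_elim (metis snd_conv)
  ultimately show thesis
    using \<phi> by (intro that) (auto simp: converges_to_iff_eventually)
qed

lemma cut_set_on_limit:
  assumes conv: "converges_to (\<lambda>i. shifted (u i) (v i)) t"
    and cuts: "\<And>k. eventually (\<lambda>i. k \<in> Cs i \<longleftrightarrow> k \<in> C) sequentially"
    and window: "\<And>i. cut_set_on X M (\<lambda>k. the (shifted (u i) (v i) k)) (Cs i) (- rad i) (rad i)"
    and "filterlim rad at_top sequentially"
  shows "cut_set_on X M t C (- r) r"
proof -
  have "eventually (\<lambda>i. \<forall>k\<in>{- r..r}. shifted (u i) (v i) k = Some (t k) \<and> (k \<in> Cs i \<longleftrightarrow> k \<in> C))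
      sequentially"
    using conv cuts
    by (intro eventually_ball_finite) (auto simp: converges_to_iff_eventually eventually_conj_iff)
  moreover have "eventually (\<lambda>i. r \<le> rad i) sequentially"
    using \<open>filterlim rad at_top sequentially\<close> unfolding filterlim_at_top by blast
  ultimately obtain i where "r \<le> rad i"
    and i: "\<forall>k\<in>{- r..r}. shifted (u i) (v i) k = Some (t k) \<and> (k \<in> Cs i \<longleftrightarrow> k \<in> C)"
    using eventually_happens'[OF sequentially_bot eventually_conj] by blast
  have "cut_set_on X M (\<lambda>k. the (shifted (u i) (v i) k)) (Cs i) (- r) r"
    by (rule cut_set_on_mono[OF window]) (use \<open>r \<le> rad i\<close> in linarith)+
  then show ?thesis
    by (rule cut_set_on_cong) (use i in auto)
qed

lemma two_Xfacts_of_cut_set_limits: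
  assumes conv: "converges_to (\<lambda>i. shifted (u i) (v i)) t"
    and lab: "\<And>k. eventually (\<lambda>i. (k \<in> C1 i, k \<in> C2 i) = l k) sequentially"
    and "\<And>i. 0 \<in> C1 i" "\<And>i. 0 \<notin> C2 i"
    and window1: "\<And>i. cut_set_on X M (\<lambda>k. the (shifted (u i) (v i) k)) (C1 i) (- rad i) (rad i)"
    and window2: "\<And>i. cut_set_on X M (\<lambda>k. the (shifted (u i) (v i) k)) (C2 i) (- rad i) (rad i)"
    and rad: "filterlim rad at_top sequentially"
  shows "two_Xfacts X t"
proof -
  define CI CF where "CI = {k. fst (l k)}" and "CF = {k. snd (l k)}"
  have lab1: "eventually (\<lambda>i. k \<in> C1 i \<longleftrightarrow> k \<in> CI) sequentially" for k
    using lab[of k] by eventually_elim (metis CI_def fst_conv mem_Collect_eq)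
  have lab2: "eventually (\<lambda>i. k \<in> C2 i \<longleftrightarrow> k \<in> CF) sequentially" for k
    using lab[of k] by eventually_elim (metis CF_def snd_conv mem_Collect_eq)
  obtain x p q where fact: "is_Xfact X t x p q" "p = [] \<longleftrightarrow> 0 \<in> CI"
    using Xfact_of_cut_set[OF cut_set_on_limit[OF conv lab1 window1 rad]] by blast
  obtain x' p' q' where fact': "is_Xfact X t x' p' q'" "p' = [] \<longleftrightarrow> 0 \<in> CF"
    using Xfact_of_cut_set[OF cut_set_on_limit[OF conv lab2 window2 rad]] by blast
  obtain i where "0 \<in> C1 i \<longleftrightarrow> 0 \<in> CI" "0 \<in> C2 i \<longleftrightarrow> 0 \<in> CF"
    using eventually_happens'[OF sequentially_bot eventually_conj[OF lab1 lab2]] by blast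
  with assms(3,4) fact(2) fact'(2) have "(p, q) \<noteq> (p', q')" by auto
  with fact(1) fact'(1) show ?thesis
    unfolding two_Xfacts_def by blast
qed

lemma filterlim_half_minus_at_top:
  fixes f :: "nat \<Rightarrow> nat" and c :: int
  assumes "filterlim f at_top sequentially"
  shows "filterlim (\<lambda>i. int (f i div 2) - c) at_top sequentially"
  unfolding filterlim_at_top
proof
  fix Z :: int
  have "eventually (\<lambda>i. nat (2 * (Z + c)) \<le> f i) sequentially"
    using assms unfolding filterlim_at_top by blast
  then show "eventually (\<lambda>i. Z \<le> int (f i div 2) - c) sequentially"
  proof eventually_elim
    case (elim i)
    then have "2 * (Z + c) \<le> int (f i)" by (simp add: nat_le_iff)
    then have "Z + c \<le> int (f i) div 2" by presburger
    then show ?case by (simp add: zdiv_int)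
  qed
qed

lemma not_sync_word_nonempty: "\<not> sync_word X w \<Longrightarrow> \<exists>x\<in>X. x \<noteq> []"
proof (erule contrapos_np)
  assume "\<not> (\<exists>x\<in>X. x \<noteq> [])"
  then have "star X \<subseteq> {[]}"
    unfolding star_def by (auto; blast)
  moreover have "[] \<in> star X"
    unfolding star_def by (intro CollectI exI[of _ "[]"]) simp
  ultimately show "sync_word X w"
    unfolding sync_word_def by (intro exI[of _ w] exI[of _ "[]"]) auto
qed

theorem lemma28:
  fixes X :: "'a list set" and w :: "nat \<Rightarrow> 'a list"
  assumes "finite X"
    and "filterlim (\<lambda>i. length (w i)) at_top sequentially"
    and "\<forall>i. has_interp X (w i)"
    and "\<forall>i. \<not> sync_word X (w i)"
  shows "\<exists>u v. (\<forall>i. w i = u i @ v i) \<and>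
           (\<exists>\<phi> t. strict_mono \<phi> \<and>
              converges_to (\<lambda>i. shifted (u (\<phi> i)) (v (\<phi> i))) t \<and> two_Xfacts X t)"
proof -
  define M where "M = Max (length ` X)"
  define rad where "rad i = int (length (w i) div 2) - 2 * int M" for i
  have short: "\<forall>x\<in>X. length x \<le> M" using \<open>finite X\<close> by (simp add: M_def)
  obtain x where "x \<in> X" "x \<noteq> []" using not_sync_word_nonempty assms(4) by blast
  with short have "0 < length x" "length x \<le> M" by auto
  then have "0 < M" by linarith
  obtain U V C1 C2 where split: "\<And>i. w i = U i @ V i" "\<And>i. 0 \<in> C1 i" "\<And>i. 0 \<notin> C2 i"
    "\<And>i. rad i \<le> int (length (U i))" "\<And>i. rad i \<le> int (length (V i))"
    "\<And>i. cut_set_on X M (\<lambda>k. the (shifted (U i) (V i) k)) (C1 i) (- rad i) (rad i)"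
    "\<And>i. cut_set_on X M (\<lambda>k. the (shifted (U i) (V i) k)) (C2 i) (- rad i) (rad i)"
    by (rule split_with_two_cut_sets[OF assms(3,4) short \<open>0 < M\<close> rad_def]) (rule that)
  have rad: "filterlim rad at_top sequentially"
    unfolding rad_def by (rule filterlim_half_minus_at_top[OF assms(2)])
  have letters: "set (U i @ V i) \<subseteq> \<Union> (set ` X)" for i
    using has_interp_letters[of X "w i"] assms(3) split(1)[of i, symmetric] by simp
  obtain \<phi> t l where \<phi>: "strict_mono \<phi>"
    and conv: "converges_to (\<lambda>i. shifted (U (\<phi> i)) (V (\<phi> i))) t"
    and lab: "\<And>k. eventually (\<lambda>i. (k \<in> C1 (\<phi> i), k \<in> C2 (\<phi> i)) = l k) sequentially"
    by (rule shifted_convergent_subseq[OF _ letters split(4,5) rad,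
          where lab = "\<lambda>i k. (k \<in> C1 i, k \<in> C2 i)"])
      (use \<open>finite X\<close> in auto)
  have "two_Xfacts X t"
    using filterlim_compose[OF rad filterlim_subseq[OF \<phi>]]
    by (rule two_Xfacts_of_cut_set_limits[OF conv lab split(2,3,6,7)])
  with split(1) \<phi> conv show ?thesis by blast
qed

end
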